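(* Let $V\subset\mathbb{R}^d$ be the closure of a bounded domain. There exists a constant $C>0$ such that for all $\rho^i=h_i\delta_{\gamma_i}\in\mathscr{C}_V$, $i=1,2$, $$\frac1C\,H^2(\rho^1,\rho^2)\le d_F(\rho^1,\rho^2)\le C\sqrt{h_1+h_2}\,H(\rho^1,\rho^2).$$ In particular $H$ and $d_F$ induce the same topology on $\mathscr{C}_V$.
   Context: $\mathscr{C}_V:=\{h\delta_\gamma\in\mathcal{M}(V):h\ge0,\ \gamma\in V\}$. The flat distance is $d_F(\rho^1,\rho^2):=\sup\{\int_V\varphi\,d(\rho^1-\rho^2):\varphi\in C(V),\ \|\varphi\|_\infty\le1,\ \mathrm{Lip}(\varphi)\le1\}$. The Hellinger–Kantorovich distance $H\ge0$ on $\mathscr{C}_V$ is given by $$H^2(\rho^1,\rho^2)=\begin{cases}h_1+h_2-2\sqrt{h_1h_2}\cos(|\gamma_1-\gamma_2|)&\text{if }|\gamma_1-\gamma_2|\le\pi,\\ h_1+h_2+2\sqrt{h_1h_2}&\text{otherwise.}\end{cases}$$ *)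

theory Defs
  imports "HOL-Analysis.Analysis"
begin

text \<open>A Dirac-type measure h\<delta>_\<gamma> in C_V is represented by its mass h \<ge> 0 and
  location \<gamma> \<in> V. For such measures the integral of \<phi> against
  \<rho>1 - \<rho>2 is h1 \<phi>(\<gamma>1) - h2 \<phi>(\<gamma>2).\<close>

definition flat_dist_dirac ::
  "'a::euclidean_space set \<Rightarrow> real \<Rightarrow> 'a \<Rightarrow> real \<Rightarrow> 'a \<Rightarrow> real" where
  "flat_dist_dirac V h1 g1 h2 g2 =
     Sup {h1 * \<phi> g1 - h2 * \<phi> g2 | \<phi>.
            continuous_on V \<phi> \<and> (\<forall>x\<in>V. \<bar>\<phi> x\<bar> \<le> 1) \<and> lipschitz_on 1 V \<phi>}"

definition HK_sq :: "real \<Rightarrow> 'a::euclidean_space \<Rightarrow> real \<Rightarrow> 'a \<Rightarrow> real" where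
  "HK_sq h1 g1 h2 g2 =
     (if norm (g1 - g2) \<le> pi
      then h1 + h2 - 2 * sqrt (h1 * h2) * cos (norm (g1 - g2))
      else h1 + h2 + 2 * sqrt (h1 * h2))"

definition HK :: "real \<Rightarrow> 'a::euclidean_space \<Rightarrow> real \<Rightarrow> 'a \<Rightarrow> real" where
  "HK h1 g1 h2 g2 = sqrt (HK_sq h1 g1 h2 g2)"

end

theory Submission
  imports Defs
begin

text \<open>Write \<open>h\<^sub>i = a\<^sub>i\<^sup>2\<close> and \<open>d = |\<gamma>\<^sub>1 - \<gamma>\<^sub>2|\<close>. Testing against \<open>\<plusminus>1\<close> and
  \<open>\<plusminus>min 1 |x - \<gamma>\<^sub>i|\<close> gives \<open>d\<^sub>F \<ge> |h\<^sub>1 - h\<^sub>2|\<close> and \<open>d\<^sub>F \<ge> max h\<^sub>1 h\<^sub>2 \<cdot> min 1 d\<close>,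
  while splitting \<open>h\<^sub>1\<phi>(\<gamma>\<^sub>1) - h\<^sub>2\<phi>(\<gamma>\<^sub>2) = (h\<^sub>1 - h\<^sub>2)\<phi>(\<gamma>\<^sub>1) + h\<^sub>2(\<phi>(\<gamma>\<^sub>1) - \<phi>(\<gamma>\<^sub>2))\<close> gives
  \<open>d\<^sub>F \<le> min (h\<^sub>1 + h\<^sub>2) (|h\<^sub>1 - h\<^sub>2| + min h\<^sub>1 h\<^sub>2 \<cdot> d)\<close>.
  For \<open>d \<le> \<pi>\<close>, \<open>H\<^sup>2 = (a\<^sub>1 - a\<^sub>2)\<^sup>2 + 2a\<^sub>1a\<^sub>2(1 - cos d)\<close> and \<open>1 - cos d\<close> is comparable
  to \<open>d\<^sup>2\<close>, so \<open>H\<^sup>2\<close> is comparable to \<open>(a\<^sub>1 - a\<^sub>2)\<^sup>2 + a\<^sub>1a\<^sub>2d\<^sup>2\<close>; together with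
  \<open>|h\<^sub>1 - h\<^sub>2| = |a\<^sub>1 - a\<^sub>2|(a\<^sub>1 + a\<^sub>2)\<close> this compares \<open>H\<close> and \<open>d\<^sub>F\<close> both ways.
  For \<open>d > \<pi>\<close>, \<open>H = a\<^sub>1 + a\<^sub>2\<close> is comparable to \<open>\<surd>(h\<^sub>1 + h\<^sub>2)\<close>.
  Nothing about \<open>V\<close> is used beyond \<open>\<gamma>\<^sub>1, \<gamma>\<^sub>2 \<in> V\<close>.\<close>

lemma sin_ge_two_fifths:
  fixes x :: real
  assumes "0 \<le> x" "x \<le> pi/2"
  shows "2/5 * x \<le> sin x"
proof -
  have taylor: "\<bar>sin x - (x - x^3/6)\<bar> \<le> x^4/24"
  proof -
    have "(\<Sum>m<4. sin_coeff m * x^m) = x - x^3/6"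
      by (simp add: lessThan_nat_numeral sin_coeff_def fact_numeral)
    then show ?thesis using Maclaurin_sin_bound[of x 4] assms by (simp add: fact_numeral)
  qed
  have x1: "x \<le> 1.6" using pi_approx assms by simp
  have x2: "x*x \<le> 2.56" using mult_mono[OF x1 x1] assms by simp
  have x3: "x * (x*x) \<le> 1.6 * 2.56" using mult_mono[OF x1 x2] assms by simp
  have "x^3/6 + x^4/24 = x * (x*x/6 + x*(x*x)/24)" by (simp add: eval_nat_numeral algebra_simps)
  also have "\<dots> \<le> x * (3/5)" using x2 x3 assms by (intro mult_left_mono) auto
  finally show ?thesis using taylor by linarith
qed

lemma one_minus_cos_le:
  fixes d :: real
  shows "1 - cos d \<le> d\<^sup>2 / 2"
proof -
  have "\<bar>sin (d/2)\<bar> \<le> \<bar>d/2\<bar>" by (rule abs_sin_x_le_abs_x)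
  then have "sin (d/2) ^ 2 \<le> (d/2)^2" by (metis power2_abs abs_ge_zero power_mono)
  then show ?thesis using cos_double_sin[of "d/2"] by (simp add: power_divide)
qed

lemma one_minus_cos_ge:
  fixes d :: real
  assumes "0 \<le> d" "d \<le> pi"
  shows "d\<^sup>2 / 32 \<le> 1 - cos d"
proof -
  have "(2/5 * (d/2))^2 \<le> sin (d/2) ^ 2"
    using sin_ge_two_fifths[of "d/2"] assms by (intro power_mono) auto
  then have "d^2 \<le> 25 * sin (d/2) ^ 2" by (simp add: power_mult_distrib power_divide)
  moreover have "0 \<le> sin (d/2) ^ 2" by simp
  moreover have "cos d = 1 - 2 * sin (d/2) ^ 2" using cos_double_sin[of "d/2"] by simp
  ultimately show ?thesis by linarith
qed

lemma abs_diff_sq_eq: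
  fixes a b :: real
  assumes "0 \<le> a" "0 \<le> b"
  shows "\<bar>a\<^sup>2 - b\<^sup>2\<bar> = \<bar>a - b\<bar> * (a + b)"
proof -
  have "a\<^sup>2 - b\<^sup>2 = (a - b) * (a + b)" by (simp add: power2_eq_square algebra_simps)
  then show ?thesis using assms by (simp add: abs_mult)
qed

lemma sq_diff_le_abs_diff_sq:
  fixes a b :: real
  assumes "0 \<le> a" "0 \<le> b"
  shows "(a - b)\<^sup>2 \<le> \<bar>a\<^sup>2 - b\<^sup>2\<bar>"
proof -
  have "(a - b)\<^sup>2 = \<bar>a - b\<bar> * \<bar>a - b\<bar>" by (simp add: power2_eq_square abs_mult_self_eq)
  also have "\<dots> \<le> \<bar>a - b\<bar> * (a + b)" using assms by (intro mult_left_mono) auto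
  also have "\<dots> = \<bar>a\<^sup>2 - b\<^sup>2\<bar>" using abs_diff_sq_eq[OF assms] by simp
  finally show ?thesis .
qed

lemma abs_diff_sq_le:
  fixes a b :: real
  assumes "0 \<le> a" "0 \<le> b"
  shows "\<bar>a\<^sup>2 - b\<^sup>2\<bar> \<le> 2 * sqrt (a\<^sup>2 + b\<^sup>2) * \<bar>a - b\<bar>"
proof -
  have "a \<le> sqrt (a\<^sup>2 + b\<^sup>2)" "b \<le> sqrt (a\<^sup>2 + b\<^sup>2)" by (simp_all add: real_le_rsqrt)
  then have "a + b \<le> 2 * sqrt (a\<^sup>2 + b\<^sup>2)" by linarith
  then have "\<bar>a - b\<bar> * (a + b) \<le> \<bar>a - b\<bar> * (2 * sqrt (a\<^sup>2 + b\<^sup>2))"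
    by (intro mult_left_mono) auto
  then show ?thesis using abs_diff_sq_eq[OF assms] by (simp add: mult_ac)
qed

lemma min_le_sqrt_mult:
  fixes x y :: real
  assumes "0 \<le> x" "0 \<le> y"
  shows "min x y \<le> sqrt (x * y)"
  using assms by (intro real_le_rsqrt) (auto simp: power2_eq_square min_def intro: mult_mono)

lemma sqrt_mult_le_max:
  fixes x y :: real
  assumes "0 \<le> x" "0 \<le> y"
  shows "sqrt (x * y) \<le> max x y"
  using arith_geo_mean_sqrt[OF assms] by (simp add: max_def)

lemma sq_le_ten_min_one:
  fixes d :: real
  assumes "0 \<le> d" "d \<le> pi"
  shows "d\<^sup>2 \<le> 10 * min 1 d"
proof (cases "d \<le> 1")
  case True
  then show ?thesis using assms mult_left_mono[OF True, of d] by (simp add: power2_eq_square)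
next
  case False
  have "d * d \<le> pi * pi" using mult_mono[OF \<open>d \<le> pi\<close> \<open>d \<le> pi\<close>] assms by simp
  moreover have "pi * pi \<le> 10" using pi_approx mult_mono[of pi "3.16" pi "3.16"] by simp
  ultimately show ?thesis using False by (simp add: power2_eq_square)
qed

lemma HK_sq_sqrt_form:
  assumes "0 \<le> h1" "0 \<le> h2"
  shows "HK_sq h1 g1 h2 g2 =
    (if dist g1 g2 \<le> pi
     then (sqrt h1 - sqrt h2)\<^sup>2 + 2 * sqrt (h1 * h2) * (1 - cos (dist g1 g2))
     else (sqrt h1 + sqrt h2)\<^sup>2)"
  using assms by (simp add: HK_sq_def dist_norm power2_eq_square real_sqrt_mult algebra_simps)

lemma HK_sq_nonneg:
  assumes "0 \<le> h1" "0 \<le> h2"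
  shows "0 \<le> HK_sq h1 g1 h2 g2"
  using assms by (simp add: HK_sq_sqrt_form)

lemma HK_sq_le:
  assumes "0 \<le> h1" "0 \<le> h2" "dist g1 g2 \<le> pi"
  shows "HK_sq h1 g1 h2 g2 \<le> (sqrt h1 - sqrt h2)\<^sup>2 + sqrt (h1 * h2) * (dist g1 g2)\<^sup>2"
  using assms mult_left_mono[OF one_minus_cos_le[of "dist g1 g2"], of "2 * sqrt (h1 * h2)"]
  by (simp add: HK_sq_sqrt_form)

lemma HK_sq_ge:
  assumes "0 \<le> h1" "0 \<le> h2" "dist g1 g2 \<le> pi"
  shows "(sqrt h1 - sqrt h2)\<^sup>2 + sqrt (h1 * h2) * (dist g1 g2)\<^sup>2 / 16 \<le> HK_sq h1 g1 h2 g2"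
  using assms mult_left_mono[OF one_minus_cos_ge[of "dist g1 g2"], of "2 * sqrt (h1 * h2)"]
  by (simp add: HK_sq_sqrt_form)

lemma lipschitz_on_min_one_dist:
  fixes g :: "'a::metric_space"
  shows "1-lipschitz_on V (\<lambda>x. min 1 (dist x g))"
proof (rule lipschitz_onI)
  fix x y assume "x \<in> V" "y \<in> V"
  have "\<bar>dist x g - dist g y\<bar> \<le> dist x y" by (rule abs_dist_diff_le)
  then show "dist (min 1 (dist x g)) (min 1 (dist y g)) \<le> 1 * dist x y"
    by (simp add: dist_real_def dist_commute min_def split: if_splits) linarith
qed simp

lemma weighted_diff_le:
  fixes h1 h2 p q d :: real
  assumes "0 \<le> h1" "0 \<le> h2" "\<bar>p\<bar> \<le> 1" "\<bar>q\<bar> \<le> 1" "\<bar>p - q\<bar> \<le> d"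
  shows "h1 * p - h2 * q \<le> h1 + h2"
    and "h1 * p - h2 * q \<le> \<bar>h1 - h2\<bar> + min h1 h2 * d"
proof -
  have "h1 * p \<le> h1 * 1" "h2 * (- q) \<le> h2 * 1" using assms by (intro mult_left_mono; simp)+
  then show "h1 * p - h2 * q \<le> h1 + h2" by simp
  show "h1 * p - h2 * q \<le> \<bar>h1 - h2\<bar> + min h1 h2 * d"
  proof (cases "h2 \<le> h1")
    case True
    have "(h1 - h2) * p \<le> (h1 - h2) * 1" "h2 * (p - q) \<le> h2 * d"
      using True assms by (intro mult_left_mono; simp)+
    then show ?thesis using True by (simp add: algebra_simps)
  next
    case False
    have "(h2 - h1) * (- q) \<le> (h2 - h1) * 1" "h1 * (p - q) \<le> h1 * d"
      using False assms by (intro mult_left_mono; simp)+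
    then show ?thesis using False by (simp add: algebra_simps)
  qed
qed

lemma flat_dist_dirac_test_le:
  fixes V :: "'a::euclidean_space set"
  assumes "0 \<le> h1" "0 \<le> h2" "g1 \<in> V" "g2 \<in> V"
    and "\<forall>x\<in>V. \<bar>\<phi> x\<bar> \<le> 1" "1-lipschitz_on V \<phi>"
  shows "h1 * \<phi> g1 - h2 * \<phi> g2 \<le> h1 + h2"
    and "h1 * \<phi> g1 - h2 * \<phi> g2 \<le> \<bar>h1 - h2\<bar> + min h1 h2 * dist g1 g2"
proof -
  have "\<bar>\<phi> g1 - \<phi> g2\<bar> \<le> dist g1 g2"
    using lipschitz_onD[OF assms(6,3,4)] by (simp add: dist_real_def)
  then show "h1 * \<phi> g1 - h2 * \<phi> g2 \<le> h1 + h2"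
    and "h1 * \<phi> g1 - h2 * \<phi> g2 \<le> \<bar>h1 - h2\<bar> + min h1 h2 * dist g1 g2"
    using weighted_diff_le assms by auto
qed

lemma flat_dist_dirac_le:
  fixes V :: "'a::euclidean_space set"
  assumes "0 \<le> h1" "0 \<le> h2" "g1 \<in> V" "g2 \<in> V"
  shows "flat_dist_dirac V h1 g1 h2 g2 \<le> h1 + h2"
    and "flat_dist_dirac V h1 g1 h2 g2 \<le> \<bar>h1 - h2\<bar> + min h1 h2 * dist g1 g2"
proof -
  have "1-lipschitz_on V (\<lambda>_. 0::real)" by (rule lipschitz_onI) auto
  then have nonempty: "{h1 * \<phi> g1 - h2 * \<phi> g2 | \<phi>. continuous_on V \<phi> \<and>
      (\<forall>x\<in>V. \<bar>\<phi> x\<bar> \<le> 1) \<and> lipschitz_on 1 V \<phi>} \<noteq> {}"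
    by (auto intro: lipschitz_on_continuous_on)
  show "flat_dist_dirac V h1 g1 h2 g2 \<le> h1 + h2"
    and "flat_dist_dirac V h1 g1 h2 g2 \<le> \<bar>h1 - h2\<bar> + min h1 h2 * dist g1 g2"
    unfolding flat_dist_dirac_def using flat_dist_dirac_test_le[OF assms]
    by (auto intro!: cSup_least[OF nonempty])
qed

lemma flat_dist_dirac_ge_test:
  fixes V :: "'a::euclidean_space set"
  assumes "0 \<le> h1" "0 \<le> h2" "g1 \<in> V" "g2 \<in> V"
    and "\<forall>x\<in>V. \<bar>\<phi> x\<bar> \<le> 1" "1-lipschitz_on V \<phi>"
  shows "h1 * \<phi> g1 - h2 * \<phi> g2 \<le> flat_dist_dirac V h1 g1 h2 g2"
proof -
  have "bdd_above {h1 * \<phi> g1 - h2 * \<phi> g2 | \<phi>. continuous_on V \<phi> \<and>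
      (\<forall>x\<in>V. \<bar>\<phi> x\<bar> \<le> 1) \<and> lipschitz_on 1 V \<phi>}"
    using flat_dist_dirac_test_le(1)[OF assms(1-4)] by (intro bdd_aboveI[of _ "h1 + h2"]) auto
  then show ?thesis
    unfolding flat_dist_dirac_def using assms(5,6)
    by (auto intro!: cSup_upper intro: lipschitz_on_continuous_on)
qed

lemma flat_dist_dirac_ge:
  fixes V :: "'a::euclidean_space set"
  assumes "0 \<le> h1" "0 \<le> h2" "g1 \<in> V" "g2 \<in> V"
  shows "\<bar>h1 - h2\<bar> \<le> flat_dist_dirac V h1 g1 h2 g2"
    and "max h1 h2 * min 1 (dist g1 g2) \<le> flat_dist_dirac V h1 g1 h2 g2"
proof -
  note test = flat_dist_dirac_ge_test[OF assms]
  have const: "1-lipschitz_on V (\<lambda>_. c::real)" for c by (rule lipschitz_onI) auto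
  have "h1 - h2 \<le> flat_dist_dirac V h1 g1 h2 g2" "h2 - h1 \<le> flat_dist_dirac V h1 g1 h2 g2"
    using test[OF _ const, of 1] test[OF _ const, of "-1"] by auto
  then show "\<bar>h1 - h2\<bar> \<le> flat_dist_dirac V h1 g1 h2 g2" by linarith
  have "h1 * min 1 (dist g1 g2) \<le> flat_dist_dirac V h1 g1 h2 g2"
    using test[of "\<lambda>x. min 1 (dist x g2)"] by (auto intro: lipschitz_on_min_one_dist)
  moreover have "h2 * min 1 (dist g1 g2) \<le> flat_dist_dirac V h1 g1 h2 g2"
    using test[of "\<lambda>x. - min 1 (dist x g1)"]
    by (auto intro: lipschitz_on_min_one_dist lipschitz_on_minus simp: dist_commute)
  ultimately show "max h1 h2 * min 1 (dist g1 g2) \<le> flat_dist_dirac V h1 g1 h2 g2"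
    by (simp add: max_def)
qed

lemma HK_sq_le_flat_dist_dirac:
  fixes V :: "'a::euclidean_space set"
  assumes "0 \<le> h1" "0 \<le> h2" "g1 \<in> V" "g2 \<in> V"
  shows "HK_sq h1 g1 h2 g2 \<le> 11 * flat_dist_dirac V h1 g1 h2 g2"
proof -
  define F where "F = flat_dist_dirac V h1 g1 h2 g2"
  define d where "d = dist g1 g2"
  have mass: "\<bar>h1 - h2\<bar> \<le> F" and spread: "max h1 h2 * min 1 d \<le> F"
    using flat_dist_dirac_ge[OF assms] by (simp_all add: F_def d_def)
  show ?thesis
  proof (cases "d \<le> pi")
    case True
    have "(sqrt h1 - sqrt h2)\<^sup>2 \<le> \<bar>h1 - h2\<bar>"
      using sq_diff_le_abs_diff_sq[of "sqrt h1" "sqrt h2"] assms by simp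
    moreover have "sqrt (h1 * h2) * d\<^sup>2 \<le> max h1 h2 * (10 * min 1 d)"
      using sqrt_mult_le_max[OF assms(1,2)] sq_le_ten_min_one[of d] True assms
      by (intro mult_mono) (auto simp: d_def)
    moreover have "HK_sq h1 g1 h2 g2 \<le> (sqrt h1 - sqrt h2)\<^sup>2 + sqrt (h1 * h2) * d\<^sup>2"
      using HK_sq_le[OF assms(1,2)] True by (simp add: d_def)
    ultimately show ?thesis using mass spread by (simp add: F_def)
  next
    case False
    then have "min 1 d = 1" using pi_gt3 by simp
    have "(sqrt h1 + sqrt h2)\<^sup>2 \<le> 2 * (h1 + h2)"
      using sum_squares_bound[of "sqrt h1" "sqrt h2"] assms by (simp add: power2_sum)
    also have "\<dots> \<le> 4 * F" using spread \<open>min 1 d = 1\<close> by (simp add: max_def split: if_splits)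
    finally show ?thesis
      using False mass HK_sq_sqrt_form[OF assms(1,2), of g1 g2] by (simp add: F_def d_def)
  qed
qed

lemma sq_diff_sqrt_le_HK_sq:
  assumes "0 \<le> h1" "0 \<le> h2"
  shows "(sqrt h1 - sqrt h2)\<^sup>2 \<le> HK_sq h1 g1 h2 g2"
proof (cases "dist g1 g2 \<le> pi")
  case True
  moreover have "0 \<le> sqrt (h1 * h2) * (dist g1 g2)\<^sup>2 / 16" using assms by simp
  ultimately show ?thesis using HK_sq_ge[OF assms True] by linarith
next
  case False
  have "0 \<le> sqrt h1 * sqrt h2" using assms by simp
  then have "(sqrt h1 - sqrt h2)\<^sup>2 \<le> (sqrt h1 + sqrt h2)\<^sup>2"
    by (simp add: power2_diff power2_sum)
  then show ?thesis using False HK_sq_sqrt_form[OF assms, of g1 g2] by simp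
qed

lemma abs_diff_le_HK:
  assumes "0 \<le> h1" "0 \<le> h2"
  shows "\<bar>h1 - h2\<bar> \<le> 2 * sqrt (h1 + h2) * HK h1 g1 h2 g2"
proof -
  have "\<bar>sqrt h1 - sqrt h2\<bar> \<le> HK h1 g1 h2 g2"
    using sq_diff_sqrt_le_HK_sq[OF assms, of g1 g2] by (metis HK_def power2_abs real_le_rsqrt)
  then have "2 * sqrt (h1 + h2) * \<bar>sqrt h1 - sqrt h2\<bar> \<le> 2 * sqrt (h1 + h2) * HK h1 g1 h2 g2"
    using assms by (intro mult_left_mono) auto
  then show ?thesis using abs_diff_sq_le[of "sqrt h1" "sqrt h2"] assms by simp
qed

lemma min_mult_dist_le_HK:
  assumes "0 \<le> h1" "0 \<le> h2" "dist g1 g2 \<le> pi"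
  shows "min h1 h2 * dist g1 g2 \<le> 4 * sqrt (h1 + h2) * HK h1 g1 h2 g2"
proof -
  define m where "m = min h1 h2"
  define d where "d = dist g1 g2"
  have "m * d\<^sup>2 \<le> sqrt (h1 * h2) * d\<^sup>2"
    using min_le_sqrt_mult[OF assms(1,2)] by (simp add: m_def mult_right_mono)
  then have "m * d\<^sup>2 / 16 \<le> HK_sq h1 g1 h2 g2"
    using HK_sq_ge[OF assms] zero_le_power2[of "sqrt h1 - sqrt h2"] unfolding d_def by linarith
  moreover have "(sqrt m * d / 4)\<^sup>2 = m * d\<^sup>2 / 16"
    using assms by (simp add: m_def power_mult_distrib power_divide)
  ultimately have "sqrt m * d / 4 \<le> HK h1 g1 h2 g2"
    unfolding HK_def by (intro real_le_rsqrt) simp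
  then have short: "sqrt m * d \<le> 4 * HK h1 g1 h2 g2" by simp
  have small: "sqrt m \<le> sqrt (h1 + h2)" using assms by (simp add: m_def)
  have "sqrt m * (sqrt m * d) \<le> sqrt (h1 + h2) * (4 * HK h1 g1 h2 g2)"
    using mult_mono[OF small short] assms by (simp add: d_def m_def)
  then show ?thesis using assms by (simp add: m_def d_def mult_ac)
qed

lemma flat_dist_dirac_le_HK:
  fixes V :: "'a::euclidean_space set"
  assumes "0 \<le> h1" "0 \<le> h2" "g1 \<in> V" "g2 \<in> V"
  shows "flat_dist_dirac V h1 g1 h2 g2 \<le> 6 * sqrt (h1 + h2) * HK h1 g1 h2 g2"
proof (cases "dist g1 g2 \<le> pi")
  case True
  then show ?thesis
    using flat_dist_dirac_le(2)[OF assms] abs_diff_le_HK[OF assms(1,2), of g1 g2]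
      min_mult_dist_le_HK[OF assms(1,2) True] by linarith
next
  case False
  define s where "s = sqrt (h1 + h2)"
  have s0: "0 \<le> s" and "s * s = h1 + h2" using assms by (simp_all add: s_def)
  have "s \<le> sqrt h1 + sqrt h2"
    using assms by (auto simp: s_def power2_sum intro!: real_le_lsqrt)
  then have "s * s \<le> s * HK h1 g1 h2 g2"
    using False assms s0 by (simp add: HK_def HK_sq_sqrt_form mult_left_mono)
  then show ?thesis
    using flat_dist_dirac_le(1)[OF assms] \<open>s * s = h1 + h2\<close> s0 by (simp add: s_def)
qed

theorem propositionA6:
  fixes \<Omega> :: "'a::euclidean_space set"
  assumes "open \<Omega>" and "connected \<Omega>" and "\<Omega> \<noteq> {}" and "bounded \<Omega>"
  defines "V \<equiv> closure \<Omega>"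
  shows "\<exists>C>0. \<forall>h1 h2 g1 g2. h1 \<ge> 0 \<longrightarrow> h2 \<ge> 0 \<longrightarrow> g1 \<in> V \<longrightarrow> g2 \<in> V \<longrightarrow>
           (HK h1 g1 h2 g2)\<^sup>2 / C \<le> flat_dist_dirac V h1 g1 h2 g2 \<and>
           flat_dist_dirac V h1 g1 h2 g2 \<le> C * sqrt (h1 + h2) * HK h1 g1 h2 g2"
proof (intro exI[of _ 11] conjI allI impI)
  fix h1 h2 :: real and g1 g2 :: 'a
  assume hyps: "h1 \<ge> 0" "h2 \<ge> 0" "g1 \<in> V" "g2 \<in> V"
  have "(HK h1 g1 h2 g2)\<^sup>2 = HK_sq h1 g1 h2 g2"
    using HK_sq_nonneg[OF hyps(1,2), of g1 g2] by (simp add: HK_def)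
  then show "(HK h1 g1 h2 g2)\<^sup>2 / 11 \<le> flat_dist_dirac V h1 g1 h2 g2"
    using HK_sq_le_flat_dist_dirac[OF hyps] by simp
  have "0 \<le> sqrt (h1 + h2) * HK h1 g1 h2 g2"
    using HK_sq_nonneg[OF hyps(1,2), of g1 g2] hyps by (simp add: HK_def)
  then show "flat_dist_dirac V h1 g1 h2 g2 \<le> 11 * sqrt (h1 + h2) * HK h1 g1 h2 g2"
    using flat_dist_dirac_le_HK[OF hyps] by linarith
qed simp

end
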